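(* A set $\mathscr{S}\subset\mathbb{R}^n$ is a closed semilinear real tropical cone if and only if there exists a semilinear, monotone, homogeneous operator $F:\mathbb{R}^n\to\mathbb{R}^n$ such that $\mathscr{S}=\{x\in\mathbb{R}^n: x\le F(x)\}$.
   Context: A set $X\subset\mathbb{R}^n$ is a real tropical cone if for all $x,y\in X$ and all $\lambda,\mu\in\mathbb{R}$, the coordinatewise maximum $\max(\lambda+x,\mu+y)$ belongs to $X$ (the empty set qualifies). A subset of $\mathbb{R}^d$ is semilinear if it is a finite union of sets $\{x: \langle A_i,x\rangle>b_i\ (i\le p),\ \langle A_i,x\rangle=b_i\ (p<i\le q)\}$ with $A$ rational and $b$ real; a function is semilinear if its graph is semilinear. $F$ is monotone if $x\le y$ implies $F(x)\le F(y)$ (coordinatewise order), and homogeneous if $F(\lambda+x)=\lambda+F(x)$ for all $\lambda\in\mathbb{R}$, $x\in\mathbb{R}^n$. *)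

theory Defs
  imports "HOL-Analysis.Analysis"
begin

definition scal_add :: "real \<Rightarrow> real ^ 'n \<Rightarrow> real ^ 'n" where
  "scal_add c x = (\<chi> i. c + x $ i)"

definition tropical_cone :: "(real ^ 'n) set \<Rightarrow> bool" where
  "tropical_cone X \<longleftrightarrow>
     (\<forall>x\<in>X. \<forall>y\<in>X. \<forall>a b :: real.
        (\<chi> i. max (a + x $ i) (b + y $ i)) \<in> X)"

definition basic_semilinear ::
  "(('i::finite \<Rightarrow> rat) \<times> real) list \<Rightarrow> (('i \<Rightarrow> rat) \<times> real) list \<Rightarrow> (real ^ 'i) set" where
  "basic_semilinear P Q =
     {x. (\<forall>(a, b) \<in> set P. (\<Sum>j\<in>UNIV. of_rat (a j) * x $ j) > b) \<and>
         (\<forall>(a, b) \<in> set Q. (\<Sum>j\<in>UNIV. of_rat (a j) * x $ j) = b)}"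

definition semilinear_set :: "(real ^ 'i::finite) set \<Rightarrow> bool" where
  "semilinear_set S \<longleftrightarrow>
     (\<exists>L :: ((('i \<Rightarrow> rat) \<times> real) list \<times> (('i \<Rightarrow> rat) \<times> real) list) list.
        S = (\<Union>(P, Q) \<in> set L. basic_semilinear P Q))"

text \<open>Graph of F as a subset of R^(n+n): first copy = argument, second copy = value.\<close>
definition graph_vec :: "(real ^ 'n \<Rightarrow> real ^ 'n) \<Rightarrow> (real ^ ('n + 'n)) set" where
  "graph_vec F = {z. (\<chi> i. z $ Inr i) = F (\<chi> i. z $ Inl i)}"

definition semilinear_fun :: "(real ^ 'n::finite \<Rightarrow> real ^ 'n) \<Rightarrow> bool" where
  "semilinear_fun F \<longleftrightarrow> semilinear_set (graph_vec F)"

definition homogeneous_op :: "(real ^ 'n \<Rightarrow> real ^ 'n) \<Rightarrow> bool" where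
  "homogeneous_op F \<longleftrightarrow> (\<forall>c x. F (scal_add c x) = scal_add c (F x))"

end

theory Submission
  imports Defs
begin

text \<open>If \<open>F\<close> is monotone and homogeneous it is nonexpansive in the sup-norm, so
  \<open>{x. x \<le> F x}\<close> is closed, and it is a tropical cone because \<open>F\<close> commutes with the
  shifts and is monotone; it is semilinear since it is the projection of the semilinear set
  \<open>graph F \<inter> {(x, y). x \<le> y}\<close>. Conversely, a nonempty closed tropical cone \<open>S\<close> contains,
  below every \<open>x\<close>, a greatest element \<open>P x\<close>; the projection \<open>P\<close> is monotone and homogeneous,
  has \<open>S\<close> as its set of points with \<open>x \<le> P x\<close>, and its graph is defined from \<open>S\<close> by a
  first-order formula over linear constraints, hence semilinear by Fourier--Motzkin elimination.\<close>

section \<open>Semilinear sets of real functions\<close>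

type_synonym 'v constraint = "('v \<Rightarrow> rat) \<times> real"

definition lin_form :: "('v::finite \<Rightarrow> rat) \<Rightarrow> ('v \<Rightarrow> real) \<Rightarrow> real" where
  "lin_form a f = (\<Sum>v\<in>UNIV. of_rat (a v) * f v)"

definition basic_cell :: "'v::finite constraint list \<Rightarrow> 'v constraint list \<Rightarrow> ('v \<Rightarrow> real) set" where
  "basic_cell P Q = {f. (\<forall>(a, b)\<in>set P. lin_form a f > b) \<and> (\<forall>(a, b)\<in>set Q. lin_form a f = b)}"

text \<open>Semilinearity is developed for real functions on an arbitrary finite index type, so that
  graphs and projections become reindexings along sum types.\<close>
definition semilinear :: "('v::finite \<Rightarrow> real) set \<Rightarrow> bool" where
  "semilinear T \<longleftrightarrow> (\<exists>L. T = (\<Union>(P, Q)\<in>set L. basic_cell P Q))"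

lemma lin_form_lincomb:
  "lin_form (\<lambda>u. r * a u + s * a' u) f = of_rat r * lin_form a f + of_rat s * lin_form a' f"
  unfolding lin_form_def by (simp add: of_rat_add of_rat_mult sum.distrib sum_distrib_left algebra_simps)

lemma lin_form_uminus: "lin_form (\<lambda>u. - a u) f = - lin_form a f"
  unfolding lin_form_def by (simp add: of_rat_minus sum_negf)

lemma lin_form_fun_upd: "lin_form a (f(v := t)) = lin_form (a(v := 0)) f + of_rat (a v) * t"
proof -
  have "lin_form a (f(v := t)) = of_rat (a v) * t + (\<Sum>u\<in>UNIV - {v}. of_rat (a u) * f u)"
    unfolding lin_form_def by (subst sum.remove[of _ v]) auto
  moreover have "lin_form (a(v := 0)) f = (\<Sum>u\<in>UNIV - {v}. of_rat (a u) * f u)"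
    unfolding lin_form_def by (subst sum.remove[of _ v]) auto
  ultimately show ?thesis by simp
qed

lemma lin_form_indicator: "lin_form (\<lambda>u. if u = w then 1 else 0) f = f w"
proof -
  have eq: "(\<lambda>v. of_rat (if v = w then 1 else 0) * f v) = (\<lambda>v. if v = w then f v else 0)" by auto
  show ?thesis unfolding lin_form_def eq by simp
qed

lemma lin_form_comp: "lin_form a (f \<circ> \<sigma>) = lin_form (\<lambda>w. \<Sum>v\<in>{v. \<sigma> v = w}. a v) f"
proof -
  have "lin_form a (f \<circ> \<sigma>) = (\<Sum>w\<in>UNIV. \<Sum>v\<in>{v\<in>UNIV. \<sigma> v = w}. of_rat (a v) * f (\<sigma> v))"
    unfolding lin_form_def by (subst sum.group[symmetric, of UNIV UNIV \<sigma>]) auto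
  also have "\<dots> = (\<Sum>w\<in>UNIV. \<Sum>v\<in>{v. \<sigma> v = w}. of_rat (a v) * f w)"
    by (intro sum.cong refl) auto
  also have "\<dots> = lin_form (\<lambda>w. \<Sum>v\<in>{v. \<sigma> v = w}. a v) f"
    unfolding lin_form_def by (simp add: of_rat_sum sum_distrib_right)
  finally show ?thesis .
qed

lemma mem_basic_cell:
  "f \<in> basic_cell P Q \<longleftrightarrow> (\<forall>c\<in>set P. lin_form (fst c) f > snd c) \<and> (\<forall>c\<in>set Q. lin_form (fst c) f = snd c)"
  unfolding basic_cell_def by (auto simp: split_beta)

lemma basic_cell_Int: "basic_cell P Q \<inter> basic_cell P' Q' = basic_cell (P @ P') (Q @ Q')"
  unfolding basic_cell_def set_append ball_Un by auto

lemma semilinear_basic_cell: "semilinear (basic_cell P Q)"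
  unfolding semilinear_def by (rule exI[of _ "[(P, Q)]"]) simp

lemma semilinear_empty: "semilinear {}"
  unfolding semilinear_def by (rule exI[of _ "[]"]) simp

lemma semilinear_UNIV: "semilinear UNIV"
  using semilinear_basic_cell[of "[]" "[]"] by (simp add: basic_cell_def)

lemma semilinear_Un: "semilinear A \<Longrightarrow> semilinear B \<Longrightarrow> semilinear (A \<union> B)"
  unfolding semilinear_def by (metis UN_Un set_append)

lemma semilinear_UN:
  "finite I \<Longrightarrow> (\<And>i. i \<in> I \<Longrightarrow> semilinear (T i)) \<Longrightarrow> semilinear (\<Union>i\<in>I. T i)"
  by (induction I rule: finite_induct) (auto simp: semilinear_empty intro: semilinear_Un)

lemma semilinear_Int:
  assumes "semilinear A" "semilinear B"
  shows "semilinear (A \<inter> B)"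
proof -
  obtain L M where A: "A = (\<Union>(P, Q)\<in>set L. basic_cell P Q)" and B: "B = (\<Union>(P, Q)\<in>set M. basic_cell P Q)"
    using assms unfolding semilinear_def by blast
  have "A \<inter> B = (\<Union>((P, Q), (P', Q'))\<in>set (List.product L M). basic_cell (P @ P') (Q @ Q'))"
    unfolding A B by (auto simp: basic_cell_Int[symmetric])
  then show ?thesis
    by (auto intro!: semilinear_UN semilinear_basic_cell)
qed

lemma semilinear_INT:
  "finite I \<Longrightarrow> (\<And>i. i \<in> I \<Longrightarrow> semilinear (T i)) \<Longrightarrow> semilinear (\<Inter>i\<in>I. T i)"
  by (induction I rule: finite_induct) (auto simp: semilinear_UNIV intro: semilinear_Int)

lemma semilinear_INT_UNIV: "(\<And>i. semilinear (T i)) \<Longrightarrow> semilinear (\<Inter>i. T (i::'a::finite))"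
  using semilinear_INT[of UNIV T] by simp

lemma semilinear_gt: "semilinear {f. lin_form a f > b}"
  using semilinear_basic_cell[of "[(a, b)]" "[]"] by (simp add: basic_cell_def)

lemma semilinear_eq: "semilinear {f. lin_form a f = b}"
  using semilinear_basic_cell[of "[]" "[(a, b)]"] by (simp add: basic_cell_def)

lemma semilinear_lt: "semilinear {f. lin_form a f < b}"
proof -
  have "{f. lin_form a f < b} = {f. lin_form (\<lambda>u. - a u) f > - b}" by (auto simp: lin_form_uminus)
  then show ?thesis using semilinear_gt by simp
qed

lemma semilinear_le: "semilinear {f. lin_form a f \<le> b}"
proof -
  have "{f. lin_form a f \<le> b} = {f. lin_form a f < b} \<union> {f. lin_form a f = b}" by auto
  then show ?thesis using semilinear_Un[OF semilinear_lt semilinear_eq] by simp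
qed

lemma semilinear_neq: "semilinear {f. lin_form a f \<noteq> b}"
proof -
  have "{f. lin_form a f \<noteq> b} = {f. lin_form a f > b} \<union> {f. lin_form a f < b}" by auto
  then show ?thesis using semilinear_Un[OF semilinear_gt semilinear_lt] by simp
qed

lemma semilinear_Compl_basic_cell: "semilinear (- basic_cell P Q)"
proof (induction P)
  case Nil
  show ?case
  proof (induction Q)
    case Nil
    then show ?case by (simp add: basic_cell_def semilinear_empty)
  next
    case (Cons q Q)
    have "- basic_cell [] (q # Q) = {f. lin_form (fst q) f \<noteq> snd q} \<union> - basic_cell [] Q"
      by (auto simp: mem_basic_cell)
    then show ?case using semilinear_Un[OF semilinear_neq Cons] by simp
  qed
next
  case (Cons p P)
  have "- basic_cell (p # P) Q = {f. lin_form (fst p) f \<le> snd p} \<union> - basic_cell P Q"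
    by (auto simp: mem_basic_cell)
  then show ?case using semilinear_Un[OF semilinear_le Cons] by simp
qed

lemma semilinear_Compl:
  assumes "semilinear A"
  shows "semilinear (- A)"
proof -
  obtain L where A: "A = (\<Union>(P, Q)\<in>set L. basic_cell P Q)"
    using assms unfolding semilinear_def by blast
  have "- A = (\<Inter>(P, Q)\<in>set L. - basic_cell P Q)" unfolding A by auto
  then show ?thesis
    by (auto intro!: semilinear_INT semilinear_Compl_basic_cell)
qed

lemma semilinear_coord_le: "semilinear {f. f v \<le> f w}"
proof -
  have "{f. f v \<le> f w} =
      {f. lin_form (\<lambda>u. 1 * (if u = v then 1 else 0) + (-1) * (if u = w then 1 else 0)) f \<le> 0}"
    by (simp only: lin_form_lincomb lin_form_indicator) auto
  then show ?thesis using semilinear_le by simp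
qed

lemma semilinear_coord_eq_plus: "semilinear {f. f v = f w + c}"
proof -
  have "{f. f v = f w + c} =
      {f. lin_form (\<lambda>u. 1 * (if u = v then 1 else 0) + (-1) * (if u = w then 1 else 0)) f = c}"
    by (simp only: lin_form_lincomb lin_form_indicator) auto
  then show ?thesis using semilinear_eq by simp
qed

lemma semilinear_coords_le: "semilinear {f. \<forall>i. f (\<sigma> i) \<le> f (\<tau> (i::'i::finite))}"
  using semilinear_INT_UNIV[of "\<lambda>i. {f. f (\<sigma> i) \<le> f (\<tau> i)}", OF semilinear_coord_le]
  by (simp add: Collect_all_eq)

lemma semilinear_vimage_comp:
  assumes "semilinear T"
  shows "semilinear {f. f \<circ> \<sigma> \<in> T}"
proof -
  obtain L where T: "T = (\<Union>(P, Q)\<in>set L. basic_cell P Q)"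
    using assms unfolding semilinear_def by blast
  define pull :: "'a constraint \<Rightarrow> 'b constraint" where
    "pull c = (\<lambda>w. \<Sum>v\<in>{v. \<sigma> v = w}. fst c v, snd c)" for c
  have pull: "f \<circ> \<sigma> \<in> basic_cell P Q \<longleftrightarrow> f \<in> basic_cell (map pull P) (map pull Q)" for f P Q
    by (simp add: mem_basic_cell pull_def lin_form_comp)
  have "{f. f \<circ> \<sigma> \<in> T} = (\<Union>(P, Q)\<in>set L. basic_cell (map pull P) (map pull Q))"
    unfolding T by (auto simp: pull split_beta)
  then show ?thesis
    by (auto intro!: semilinear_UN semilinear_basic_cell)
qed

section \<open>Elimination of coordinates\<close>

lemma exists_strictly_between_finite:
  fixes A B :: "real set"
  assumes "finite A" "finite B" "\<forall>l\<in>A. \<forall>u\<in>B. l < u"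
  shows "\<exists>t. (\<forall>l\<in>A. l < t) \<and> (\<forall>u\<in>B. t < u)"
proof (cases "A = {} \<or> B = {}")
  case True
  then show ?thesis
  proof
    assume "A = {}"
    with assms(2) show ?thesis by (intro exI[of _ "Min B - 1"]) (auto dest: Min_le)
  next
    assume "B = {}"
    with assms(1) show ?thesis by (intro exI[of _ "Max A + 1"]) (auto dest: Max_ge)
  qed
next
  case False
  then have "Max A < Min B" using assms by auto
  moreover have "l \<le> Max A" if "l \<in> A" for l
    using assms(1) that by simp
  moreover have "Min B \<le> u" if "u \<in> B" for u
    using assms(2) that by simp
  ultimately show ?thesis by (intro exI[of _ "(Max A + Min B) / 2"]) force
qed

text \<open>An equation in which \<open>v\<close> occurs determines \<open>v\<close>; substituting its value removes \<open>v\<close>.\<close>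
lemma semilinear_exists_coord_basic_cell_eq:
  assumes ab: "(a, b) \<in> set Q" "a v \<noteq> 0"
  shows "semilinear {f. \<exists>t. f(v := t) \<in> basic_cell P Q}"
proof -
  define t0 where "t0 f = (b - lin_form (a(v := 0)) f) / of_rat (a v)" for f
  define subst :: "'a constraint \<Rightarrow> 'a constraint" where
    "subst c = ((\<lambda>u. 1 * ((fst c)(v := 0)) u + (- (fst c v / a v)) * (a(v := 0)) u),
       snd c - of_rat (fst c v / a v) * b)" for c
  have "lin_form (fst (subst c)) f =
      lin_form ((fst c)(v := 0)) f - of_rat (fst c v / a v) * lin_form (a(v := 0)) f" for c f
    unfolding subst_def fst_conv lin_form_lincomb by (simp add: of_rat_minus fun_upd_def)
  then have shift: "lin_form (fst c) (f(v := t0 f)) - snd c = lin_form (fst (subst c)) f - snd (subst c)"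
    for c f
    unfolding subst_def snd_conv t0_def lin_form_fun_upd using ab(2)
    by (simp add: of_rat_divide field_simps)
  have "lin_form (fst c) (f(v := t0 f)) > snd c \<longleftrightarrow> lin_form (fst (subst c)) f > snd (subst c)"
    "lin_form (fst c) (f(v := t0 f)) = snd c \<longleftrightarrow> lin_form (fst (subst c)) f = snd (subst c)" for c f
    using shift[of c f] by linarith+
  then have subst: "f(v := t0 f) \<in> basic_cell P Q \<longleftrightarrow> f \<in> basic_cell (map subst P) (map subst Q)" for f
    unfolding mem_basic_cell by simp
  have "t = t0 f" if "f(v := t) \<in> basic_cell P Q" for f t
  proof -
    have "lin_form a (f(v := t)) = b" using that ab(1) unfolding mem_basic_cell by force
    then show ?thesis unfolding t0_def lin_form_fun_upd using ab(2) by (simp add: field_simps)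
  qed
  then have "{f. \<exists>t. f(v := t) \<in> basic_cell P Q} = basic_cell (map subst P) (map subst Q)"
    using subst by blast
  then show ?thesis using semilinear_basic_cell by simp
qed

definition coord_bound :: "'v::finite constraint \<Rightarrow> 'v \<Rightarrow> ('v \<Rightarrow> real) \<Rightarrow> real" where
  "coord_bound c v f = (snd c - lin_form ((fst c)(v := 0)) f) / of_rat (fst c v)"

definition bound_gap :: "'v::finite constraint \<Rightarrow> 'v constraint \<Rightarrow> 'v \<Rightarrow> 'v constraint" where
  "bound_gap c d v =
     ((\<lambda>u. inverse (fst c v) * ((fst c)(v := 0)) u + (- inverse (fst d v)) * ((fst d)(v := 0)) u),
      snd c / of_rat (fst c v) - snd d / of_rat (fst d v))"

lemma lin_form_fun_upd_gt_iff_pos: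
  "fst c v > 0 \<Longrightarrow> lin_form (fst c) (f(v := t)) > snd c \<longleftrightarrow> t > coord_bound c v f"
  unfolding coord_bound_def lin_form_fun_upd by (simp add: pos_divide_less_eq algebra_simps)

lemma lin_form_fun_upd_gt_iff_neg:
  "fst c v < 0 \<Longrightarrow> lin_form (fst c) (f(v := t)) > snd c \<longleftrightarrow> t < coord_bound c v f"
  unfolding coord_bound_def lin_form_fun_upd by (simp add: neg_less_divide_eq algebra_simps)

lemma coord_bound_less_iff:
  "coord_bound c v f < coord_bound d v f \<longleftrightarrow> lin_form (fst (bound_gap c d v)) f > snd (bound_gap c d v)"
proof -
  have gap: "lin_form (fst (bound_gap c d v)) f = of_rat (inverse (fst c v)) * lin_form ((fst c)(v := 0)) f
      + of_rat (- inverse (fst d v)) * lin_form ((fst d)(v := 0)) f"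
    unfolding bound_gap_def fst_conv lin_form_lincomb ..
  show ?thesis unfolding gap unfolding coord_bound_def bound_gap_def snd_conv
    by (simp add: of_rat_inverse of_rat_minus diff_divide_distrib divide_inverse algebra_simps)
qed

text \<open>Fourier--Motzkin elimination: once no equation involves the coordinate \<open>v\<close>, a
  suitable value of \<open>v\<close> exists iff every lower bound on it is below every upper bound.\<close>
lemma semilinear_exists_coord_basic_cell_ineq:
  assumes "\<forall>c\<in>set Q. fst c v = 0"
  shows "semilinear {f. \<exists>t. f(v := t) \<in> basic_cell P Q}"
proof -
  define drop :: "'a constraint \<Rightarrow> 'a constraint" where "drop c = ((fst c)(v := 0), snd c)" for c
  define P0 where "P0 = filter (\<lambda>c. fst c v = 0) P"
  define Plo where "Plo = filter (\<lambda>c. fst c v > 0) P"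
  define Phi where "Phi = filter (\<lambda>c. fst c v < 0) P"
  have drop: "lin_form (fst c) (f(v := t)) = lin_form (fst (drop c)) f" if "fst c v = 0" for c f t
    unfolding drop_def lin_form_fun_upd using that by simp
  have "lin_form (fst c) (f(v := t)) > snd c \<longleftrightarrow>
      (if fst c v = 0 then lin_form (fst (drop c)) f > snd (drop c)
       else if fst c v > 0 then t > coord_bound c v f else t < coord_bound c v f)" for c f t
    by (auto simp: drop lin_form_fun_upd_gt_iff_pos lin_form_fun_upd_gt_iff_neg drop_def)
  then have split_P: "(\<forall>c\<in>set P. lin_form (fst c) (f(v := t)) > snd c) \<longleftrightarrow>
      (\<forall>c\<in>set P0. lin_form (fst (drop c)) f > snd (drop c)) \<and>
      (\<forall>c\<in>set Plo. t > coord_bound c v f) \<and> (\<forall>c\<in>set Phi. t < coord_bound c v f)" for f t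
    unfolding P0_def Plo_def Phi_def by (auto split: if_splits)
  have split_Q: "(\<forall>c\<in>set Q. lin_form (fst c) (f(v := t)) = snd c) \<longleftrightarrow>
      (\<forall>c\<in>set Q. lin_form (fst (drop c)) f = snd (drop c))" for f t
    using assms drop by (auto simp: drop_def)
  define gaps where "gaps = [bound_gap c d v. c \<leftarrow> Plo, d \<leftarrow> Phi]"
  have "(\<exists>t. (\<forall>c\<in>set Plo. t > coord_bound c v f) \<and> (\<forall>c\<in>set Phi. t < coord_bound c v f)) \<longleftrightarrow>
      (\<forall>c\<in>set Plo. \<forall>d\<in>set Phi. coord_bound c v f < coord_bound d v f)" for f
    using exists_strictly_between_finite[of "(\<lambda>c. coord_bound c v f) ` set Plo" "(\<lambda>c. coord_bound c v f) ` set Phi"]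
    by (auto intro: less_trans)
  also have "\<dots> f \<longleftrightarrow> (\<forall>g\<in>set gaps. lin_form (fst g) f > snd g)" for f
    unfolding gaps_def by (auto simp: coord_bound_less_iff)
  finally have gaps: "(\<exists>t. (\<forall>c\<in>set Plo. t > coord_bound c v f) \<and> (\<forall>c\<in>set Phi. t < coord_bound c v f)) \<longleftrightarrow>
      (\<forall>g\<in>set gaps. lin_form (fst g) f > snd g)" for f .
  have "(\<exists>t. f(v := t) \<in> basic_cell P Q) \<longleftrightarrow> (\<forall>c\<in>set P0. lin_form (fst (drop c)) f > snd (drop c)) \<and>
      (\<exists>t. (\<forall>c\<in>set Plo. t > coord_bound c v f) \<and> (\<forall>c\<in>set Phi. t < coord_bound c v f)) \<and>
      (\<forall>c\<in>set Q. lin_form (fst (drop c)) f = snd (drop c))" for f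
    unfolding mem_basic_cell split_P split_Q by blast
  then have "{f. \<exists>t. f(v := t) \<in> basic_cell P Q} = basic_cell (map drop P0 @ gaps) (map drop Q)"
    unfolding set_eq_iff mem_Collect_eq gaps by (simp add: mem_basic_cell ball_Un)
  then show ?thesis using semilinear_basic_cell by simp
qed

lemma semilinear_exists_coord:
  assumes "semilinear T"
  shows "semilinear {f. \<exists>t. f(v := t) \<in> T}"
proof -
  obtain L where T: "T = (\<Union>(P, Q)\<in>set L. basic_cell P Q)"
    using assms unfolding semilinear_def by blast
  have "{f. \<exists>t. f(v := t) \<in> T} = (\<Union>(P, Q)\<in>set L. {f. \<exists>t. f(v := t) \<in> basic_cell P Q})"
    unfolding T by blast
  moreover have "semilinear {f. \<exists>t. f(v := t) \<in> basic_cell P Q}" for P Q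
    using semilinear_exists_coord_basic_cell_eq semilinear_exists_coord_basic_cell_ineq
    by (metis prod.collapse)
  ultimately show ?thesis by (auto intro: semilinear_UN)
qed

lemma semilinear_exists_coords:
  assumes "semilinear T"
  shows "semilinear {f. \<exists>g\<in>T. \<forall>u. u \<notin> V \<longrightarrow> g u = f u}"
  using finite[of V]
proof (induction V rule: finite_induct)
  case empty
  then show ?case using assms by (simp add: fun_eq_iff[symmetric])
next
  case (insert v V)
  have "{f. \<exists>g\<in>T. \<forall>u. u \<notin> insert v V \<longrightarrow> g u = f u} =
      {f. \<exists>t. f(v := t) \<in> {f. \<exists>g\<in>T. \<forall>u. u \<notin> V \<longrightarrow> g u = f u}}"
  proof (intro set_eqI iffI CollectI; elim CollectE bexE exE)
    fix f g assume "g \<in> T" "\<forall>u. u \<notin> insert v V \<longrightarrow> g u = f u"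
    then show "\<exists>t. f(v := t) \<in> {f. \<exists>g\<in>T. \<forall>u. u \<notin> V \<longrightarrow> g u = f u}"
      by (intro exI[of _ "g v"]) auto
  next
    fix f t g assume "g \<in> T" "\<forall>u. u \<notin> V \<longrightarrow> g u = (f(v := t)) u"
    then show "\<exists>g\<in>T. \<forall>u. u \<notin> insert v V \<longrightarrow> g u = f u" by (intro bexI[of _ g]) auto
  qed
  then show ?case using semilinear_exists_coord[OF insert.IH] by simp
qed

lemma semilinear_project:
  fixes T :: "('a::finite + 'b::finite \<Rightarrow> real) set"
  assumes "semilinear T"
  shows "semilinear {f. \<exists>g. case_sum f g \<in> T}"
proof -
  define \<sigma> :: "'a + 'b \<Rightarrow> 'a" where "\<sigma> = case_sum id (\<lambda>_. undefined)"
  have "{f. \<exists>g. case_sum f g \<in> T} = {f. f \<circ> \<sigma> \<in> {h. \<exists>k\<in>T. \<forall>u. u \<notin> range Inr \<longrightarrow> k u = h u}}"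
  proof (intro set_eqI iffI; clarsimp)
    fix f g assume "case_sum f g \<in> T"
    then show "\<exists>k\<in>T. \<forall>u. u \<notin> range Inr \<longrightarrow> k u = f (\<sigma> u)"
      by (intro bexI[of _ "case_sum f g"]) (auto simp: \<sigma>_def split: sum.split)
  next
    fix f k assume "k \<in> T" "\<forall>u. u \<notin> range Inr \<longrightarrow> k u = f (\<sigma> u)"
    then have "k (Inl a) = f a" for a by (auto simp: \<sigma>_def)
    then have "case_sum f (k \<circ> Inr) = k" by (auto simp: fun_eq_iff split: sum.split)
    with \<open>k \<in> T\<close> show "\<exists>g. case_sum f g \<in> T" by metis
  qed
  then show ?thesis
    using semilinear_vimage_comp[OF semilinear_exists_coords[OF assms]] by simp
qed

lemma semilinear_set_iff: "semilinear_set S \<longleftrightarrow> semilinear {f. vec_lambda f \<in> S}"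
proof -
  have cells: "x \<in> (\<Union>(P, Q)\<in>set L. basic_semilinear P Q) \<longleftrightarrow> vec_nth x \<in> (\<Union>(P, Q)\<in>set L. basic_cell P Q)"
    for x L
    by (auto simp: basic_semilinear_def basic_cell_def lin_form_def split_beta)
  have "S = (\<Union>(P, Q)\<in>set L. basic_semilinear P Q) \<longleftrightarrow>
      {f. vec_lambda f \<in> S} = (\<Union>(P, Q)\<in>set L. basic_cell P Q)" for L
  proof
    assume "S = (\<Union>(P, Q)\<in>set L. basic_semilinear P Q)"
    then show "{f. vec_lambda f \<in> S} = (\<Union>(P, Q)\<in>set L. basic_cell P Q)"
      unfolding set_eq_iff mem_Collect_eq cells by (simp add: vec_lambda_inverse)
  next
    assume "{f. vec_lambda f \<in> S} = (\<Union>(P, Q)\<in>set L. basic_cell P Q)"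
    then show "S = (\<Union>(P, Q)\<in>set L. basic_semilinear P Q)"
      unfolding set_eq_iff mem_Collect_eq cells by (metis vec_nth_inverse)
  qed
  then show ?thesis unfolding semilinear_set_def semilinear_def by simp
qed

lemma semilinear_vec_vimage:
  assumes "semilinear_set S"
  shows "semilinear {f. (\<chi> i. f (\<sigma> i)) \<in> S}"
  using semilinear_vimage_comp[OF assms[unfolded semilinear_set_iff], of \<sigma>] by (simp add: o_def)

lemma semilinear_fun_iff:
  "semilinear_fun F \<longleftrightarrow> semilinear {h. (\<chi> i. h (Inr i)) = F (\<chi> i. h (Inl i))}"
  unfolding semilinear_fun_def semilinear_set_iff graph_vec_def by simp

section \<open>Tropical cones and monotone homogeneous operators\<close>

lemma scal_add_nth [simp]: "scal_add c x $ i = c + x $ i"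
  by (simp add: scal_add_def)

lemma tropical_cone_scal_add:
  assumes "tropical_cone S" "x \<in> S"
  shows "scal_add c x \<in> S"
proof -
  have "(\<chi> i. max (c + x $ i) (c + x $ i)) \<in> S"
    using assms unfolding tropical_cone_def by blast
  then show ?thesis unfolding scal_add_def by simp
qed

lemma tropical_cone_sup:
  assumes "tropical_cone S" "x \<in> S" "y \<in> S"
  shows "sup x y \<in> S"
proof -
  have "(\<chi> i. max (0 + x $ i) (0 + y $ i)) \<in> S"
    using assms unfolding tropical_cone_def by blast
  then show ?thesis unfolding sup_vec_def sup_max by simp
qed

lemma mono_homogeneous_le_norm:
  fixes F :: "real ^ 'n \<Rightarrow> real ^ 'n"
  assumes "mono F" "homogeneous_op F"
  shows "F x $ i \<le> norm (x - y) + F y $ i"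
proof -
  have "x \<le> scal_add (norm (x - y)) y"
    unfolding less_eq_vec_def
  proof
    fix j
    show "x $ j \<le> scal_add (norm (x - y)) y $ j"
      using component_le_norm_cart[of "x - y" j] by simp
  qed
  then have "F x \<le> F (scal_add (norm (x - y)) y)" by (rule monoD[OF \<open>mono F\<close>])
  also have "\<dots> = scal_add (norm (x - y)) (F y)"
    using \<open>homogeneous_op F\<close> unfolding homogeneous_op_def by simp
  finally show ?thesis unfolding less_eq_vec_def by simp
qed

lemma continuous_on_mono_homogeneous:
  fixes F :: "real ^ 'n \<Rightarrow> real ^ 'n"
  assumes "mono F" "homogeneous_op F"
  shows "continuous_on UNIV (\<lambda>x. F x $ i)"
  unfolding continuous_on_iff
proof (intro ballI allI impI exI conjI)
  fix x x' :: "real ^ 'n" and e :: real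
  assume "e > 0" and "dist x' x < e"
  then show "dist (F x' $ i) (F x $ i) < e"
    using mono_homogeneous_le_norm[OF assms, where x = x' and y = x and i = i]
      mono_homogeneous_le_norm[OF assms, where x = x and y = x' and i = i]
    by (auto simp: dist_norm dist_real_def abs_less_iff norm_minus_commute)
qed

lemma closed_Collect_le_mono_homogeneous:
  fixes F :: "real ^ 'n \<Rightarrow> real ^ 'n"
  assumes "mono F" "homogeneous_op F"
  shows "closed {x. x \<le> F x}"
proof -
  have "{x. x \<le> F x} = (\<Inter>i. {x. x $ i \<le> F x $ i})" by (auto simp: less_eq_vec_def)
  moreover have "closed {x. x $ i \<le> F x $ i}" for i
    by (intro closed_Collect_le continuous_on_component continuous_on_mono_homogeneous[OF assms]
        continuous_on_id)
  ultimately show ?thesis by auto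
qed

lemma tropical_cone_Collect_le_mono_homogeneous:
  fixes F :: "real ^ 'n \<Rightarrow> real ^ 'n"
  assumes "mono F" "homogeneous_op F"
  shows "tropical_cone {x. x \<le> F x}"
  unfolding tropical_cone_def
proof (intro ballI allI, unfold mem_Collect_eq)
  fix x y :: "real ^ 'n" and a b :: real
  assume "x \<le> F x" "y \<le> F y"
  define z where "z = (\<chi> i. max (a + x $ i) (b + y $ i))"
  have "scal_add a x \<le> z" "scal_add b y \<le> z" unfolding z_def less_eq_vec_def by auto
  then have "F (scal_add a x) \<le> F z" "F (scal_add b y) \<le> F z"
    using \<open>mono F\<close> by (auto dest: monoD)
  then have "scal_add a (F x) \<le> F z" "scal_add b (F y) \<le> F z"
    using \<open>homogeneous_op F\<close> unfolding homogeneous_op_def by simp_all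
  with \<open>x \<le> F x\<close> \<open>y \<le> F y\<close>
  have le: "x $ i \<le> F x $ i" "a + F x $ i \<le> F z $ i" "y $ i \<le> F y $ i" "b + F y $ i \<le> F z $ i" for i
    unfolding less_eq_vec_def by simp_all
  have "z $ i \<le> F z $ i" for i
  proof -
    have "z $ i = max (a + x $ i) (b + y $ i)" by (simp add: z_def)
    then show ?thesis using le[of i] by linarith
  qed
  then have "z \<le> F z" by (simp add: less_eq_vec_def)
  then show "(\<chi> i. max (a + x $ i) (b + y $ i)) \<le> F (\<chi> i. max (a + x $ i) (b + y $ i))"
    unfolding z_def .
qed

lemma semilinear_set_Collect_le:
  fixes F :: "real ^ 'n \<Rightarrow> real ^ 'n"
  assumes "semilinear_fun F"
  shows "semilinear_set {x. x \<le> F x}"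
proof -
  define W where "W = {h. (\<chi> i. h (Inr i)) = F (\<chi> i. h (Inl i))} \<inter> {h. \<forall>i. h (Inl i) \<le> h (Inr i)}"
  have "semilinear W"
    unfolding W_def using assms[unfolded semilinear_fun_iff] by (intro semilinear_Int semilinear_coords_le)
  moreover have "{f. vec_lambda f \<in> {x. x \<le> F x}} = {f. \<exists>g. case_sum f g \<in> W}"
  proof (intro set_eqI iffI; unfold mem_Collect_eq)
    fix f :: "'n \<Rightarrow> real"
    assume "vec_lambda f \<le> F (vec_lambda f)"
    then have "case_sum f (vec_nth (F (vec_lambda f))) \<in> W"
      unfolding W_def by (simp add: less_eq_vec_def vec_nth_inverse)
    then show "\<exists>g. case_sum f g \<in> W" by blast
  next
    fix f :: "'n \<Rightarrow> real"
    assume "\<exists>g. case_sum f g \<in> W"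
    then obtain g where g: "vec_lambda g = F (vec_lambda f)" and "\<forall>i. f i \<le> g i"
      unfolding W_def by auto
    then show "vec_lambda f \<le> F (vec_lambda f)" by (simp add: less_eq_vec_def flip: g)
  qed
  ultimately show ?thesis unfolding semilinear_set_iff by (simp add: semilinear_project)
qed

section \<open>Projection onto a closed tropical cone\<close>

definition tropical_proj :: "(real ^ 'n) set \<Rightarrow> real ^ 'n \<Rightarrow> real ^ 'n" where
  "tropical_proj S x = (GREATEST y. y \<in> S \<and> y \<le> x)"

lemma tropical_proj_eqI:
  assumes "y \<in> S" "y \<le> x" "\<And>z. z \<in> S \<Longrightarrow> z \<le> x \<Longrightarrow> z \<le> y"
  shows "tropical_proj S x = y"
  unfolding tropical_proj_def using assms by (intro Greatest_equality) auto

text \<open>The candidate is a maximiser of the coordinate sum over the compact set of points of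
  \<open>S\<close> between a translate of some point of \<open>S\<close> and \<open>x\<close>; closedness under \<open>sup\<close> makes it greatest.\<close>
lemma tropical_cone_greatest_below:
  fixes S :: "(real ^ 'n) set"
  assumes "closed S" "tropical_cone S" "S \<noteq> {}"
  shows "\<exists>y\<in>S. y \<le> x \<and> (\<forall>z\<in>S. z \<le> x \<longrightarrow> z \<le> y)"
proof -
  obtain s where s: "s \<in> S" using assms(3) by blast
  define lo where "lo = scal_add (Min (range (\<lambda>i. x $ i - s $ i))) s"
  have lo: "lo \<in> S" unfolding lo_def by (rule tropical_cone_scal_add[OF assms(2) s])
  have "lo \<le> x"
    unfolding lo_def less_eq_vec_def scal_add_nth
    using Min_le[of "range (\<lambda>i. x $ i - s $ i)"] by (fastforce simp: algebra_simps)
  define K where "K = S \<inter> {lo..x}"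
  have "compact K" unfolding K_def interval_cbox_cart by (intro closed_Int_compact assms(1) compact_cbox)
  moreover have "K \<noteq> {}" using lo \<open>lo \<le> x\<close> unfolding K_def by auto
  moreover have "continuous_on K (\<lambda>y. \<Sum>i\<in>UNIV. y $ i)" by (intro continuous_intros)
  ultimately obtain y where y: "y \<in> K" and y_max: "\<forall>w\<in>K. (\<Sum>i\<in>UNIV. w $ i) \<le> (\<Sum>i\<in>UNIV. y $ i)"
    using continuous_attains_sup by blast
  have "z \<le> y" if z: "z \<in> S" "z \<le> x" for z
  proof -
    have "sup z y \<in> K"
      using y z tropical_cone_sup[OF assms(2) z(1)] unfolding K_def by (auto intro: order_trans)
    then have "(\<Sum>i\<in>UNIV. sup z y $ i - y $ i) \<le> 0"
      using y_max by (simp add: sum_subtractf)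
    moreover have "\<forall>i\<in>UNIV. 0 \<le> sup z y $ i - y $ i" by (simp add: sup_vec_def)
    ultimately have "\<forall>i\<in>UNIV. sup z y $ i - y $ i = 0"
      using sum_nonneg_eq_0_iff[of UNIV "\<lambda>i. sup z y $ i - y $ i"] sum_nonneg[of UNIV "\<lambda>i. sup z y $ i - y $ i"]
      by simp
    then have "sup z y = y" by (simp add: vec_eq_iff)
    then show "z \<le> y" by (simp add: sup.absorb_iff2)
  qed
  then show ?thesis using y unfolding K_def by auto
qed

context
  fixes S :: "(real ^ 'n) set"
  assumes closed: "closed S" and cone: "tropical_cone S" and nonempty: "S \<noteq> {}"
begin

lemma tropical_proj:
  "tropical_proj S x \<in> S" "tropical_proj S x \<le> x" "z \<in> S \<Longrightarrow> z \<le> x \<Longrightarrow> z \<le> tropical_proj S x"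
  using tropical_cone_greatest_below[OF closed cone nonempty, of x] tropical_proj_eqI by metis+

lemma mono_tropical_proj: "mono (tropical_proj S)"
  by (intro monoI) (meson order_trans tropical_proj)

lemma homogeneous_tropical_proj: "homogeneous_op (tropical_proj S)"
  unfolding homogeneous_op_def
proof (intro allI tropical_proj_eqI)
  fix c x
  show "scal_add c (tropical_proj S x) \<in> S"
    using tropical_cone_scal_add[OF cone tropical_proj(1)] .
  show "scal_add c (tropical_proj S x) \<le> scal_add c x"
    using tropical_proj(2)[of x] by (simp add: less_eq_vec_def)
  fix z assume "z \<in> S" "z \<le> scal_add c x"
  then have "scal_add (- c) z \<le> tropical_proj S x"
    using tropical_cone_scal_add[OF cone] by (intro tropical_proj(3)) (auto simp: less_eq_vec_def algebra_simps)
  then show "z \<le> scal_add c (tropical_proj S x)" by (auto simp: less_eq_vec_def algebra_simps)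
qed

lemma Collect_le_tropical_proj: "{x. x \<le> tropical_proj S x} = S"
proof (intro set_eqI iffI CollectI)
  fix x
  assume "x \<in> {x. x \<le> tropical_proj S x}"
  then have "tropical_proj S x = x" using tropical_proj(2) by (simp add: order.antisym)
  then show "x \<in> S" using tropical_proj(1) by metis
qed (simp add: tropical_proj(3))

lemma eq_tropical_proj_iff:
  "y = tropical_proj S x \<longleftrightarrow> y \<in> S \<and> y \<le> x \<and> \<not> (\<exists>z\<in>S. z \<le> x \<and> \<not> z \<le> y)"
  using tropical_proj tropical_proj_eqI by metis

lemma graph_tropical_proj:
  "{h. (\<chi> i. h (Inr i)) = tropical_proj S (\<chi> i. h (Inl i))} =
    {h. (\<chi> i. h (Inr i)) \<in> S} \<inter> {h. \<forall>i. h (Inr i) \<le> h (Inl i)} \<inter>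
    - {h. \<exists>g. vec_lambda g \<in> S \<and> (\<forall>i. g i \<le> h (Inl i)) \<and> \<not> (\<forall>i. g i \<le> h (Inr i))}"
proof (rule set_eqI)
  fix h :: "'n + 'n \<Rightarrow> real"
  define x y where "x = (\<chi> i. h (Inl i))" and "y = (\<chi> i. h (Inr i))"
  have exists_below: "(\<exists>g. vec_lambda g \<in> S \<and> (\<forall>i. g i \<le> h (Inl i)) \<and> \<not> (\<forall>i. g i \<le> h (Inr i))) \<longleftrightarrow>
      (\<exists>z\<in>S. z \<le> x \<and> \<not> z \<le> y)"
  proof
    assume "\<exists>z\<in>S. z \<le> x \<and> \<not> z \<le> y"
    then obtain z where "z \<in> S" "z \<le> x" "\<not> z \<le> y" by blast
    then show "\<exists>g. vec_lambda g \<in> S \<and> (\<forall>i. g i \<le> h (Inl i)) \<and> \<not> (\<forall>i. g i \<le> h (Inr i))"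
      unfolding x_def y_def less_eq_vec_def by (intro exI[of _ "vec_nth z"]) (simp add: vec_nth_inverse)
  next
    assume "\<exists>g. vec_lambda g \<in> S \<and> (\<forall>i. g i \<le> h (Inl i)) \<and> \<not> (\<forall>i. g i \<le> h (Inr i))"
    then obtain g where "vec_lambda g \<in> S" "\<forall>i. g i \<le> h (Inl i)" "\<not> (\<forall>i. g i \<le> h (Inr i))" by blast
    then show "\<exists>z\<in>S. z \<le> x \<and> \<not> z \<le> y"
      unfolding x_def y_def less_eq_vec_def by (intro bexI[of _ "vec_lambda g"]) auto
  qed
  have below: "(\<forall>i. h (Inr i) \<le> h (Inl i)) \<longleftrightarrow> y \<le> x"
    unfolding x_def y_def less_eq_vec_def by simp
  have graph: "(\<chi> i. h (Inr i)) = tropical_proj S (\<chi> i. h (Inl i)) \<longleftrightarrow>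
      y \<in> S \<and> y \<le> x \<and> \<not> (\<exists>z\<in>S. z \<le> x \<and> \<not> z \<le> y)"
    unfolding x_def y_def by (rule eq_tropical_proj_iff)
  show "h \<in> {h. (\<chi> i. h (Inr i)) = tropical_proj S (\<chi> i. h (Inl i))} \<longleftrightarrow>
      h \<in> {h. (\<chi> i. h (Inr i)) \<in> S} \<inter> {h. \<forall>i. h (Inr i) \<le> h (Inl i)} \<inter>
        - {h. \<exists>g. vec_lambda g \<in> S \<and> (\<forall>i. g i \<le> h (Inl i)) \<and> \<not> (\<forall>i. g i \<le> h (Inr i))}"
    unfolding mem_Collect_eq Int_iff Compl_iff graph below exists_below by (simp only: y_def conj_assoc)
qed

lemma semilinear_fun_tropical_proj:
  assumes "semilinear_set S"
  shows "semilinear_fun (tropical_proj S)"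
proof -
  define A :: "(('n + 'n) + 'n \<Rightarrow> real) set" where
    "A = {k. (\<chi> i. k (Inr i)) \<in> S} \<inter> {k. \<forall>i. k (Inr i) \<le> k (Inl (Inl i))}
       \<inter> - {k. \<forall>i. k (Inr i) \<le> k (Inl (Inr i))}"
  have "semilinear A"
    unfolding A_def by (intro semilinear_Int semilinear_Compl semilinear_vec_vimage assms semilinear_coords_le)
  then have "semilinear ({h. (\<chi> i. h (Inr i)) \<in> S} \<inter> {h. \<forall>i. h (Inr i) \<le> h (Inl i)}
      \<inter> - {h. \<exists>g. case_sum h g \<in> A})"
    by (intro semilinear_Int semilinear_Compl semilinear_vec_vimage assms semilinear_coords_le semilinear_project)
  moreover have "{h. \<exists>g. case_sum h g \<in> A} =
      {h. \<exists>g. vec_lambda g \<in> S \<and> (\<forall>i. g i \<le> h (Inl i)) \<and> \<not> (\<forall>i. g i \<le> h (Inr i))}"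
    unfolding A_def by simp
  ultimately show ?thesis unfolding semilinear_fun_iff graph_tropical_proj by simp
qed

end

lemma exists_operator_Collect_le_empty:
  "\<exists>F :: real ^ 'n \<Rightarrow> real ^ 'n. semilinear_fun F \<and> mono F \<and> homogeneous_op F \<and> {x. x \<le> F x} = {}"
proof (intro exI conjI)
  define i0 :: 'n where "i0 = undefined"
  define F :: "real ^ 'n \<Rightarrow> real ^ 'n" where "F x = (\<chi> i. x $ i0 - 1)" for x
  show "mono F" unfolding F_def by (rule monoI) (simp add: less_eq_vec_def)
  show "homogeneous_op F" unfolding F_def homogeneous_op_def by (simp add: vec_eq_iff)
  have "\<not> x \<le> F x" for x
  proof
    assume "x \<le> F x"
    then have "x $ i0 \<le> F x $ i0" by (simp add: less_eq_vec_def)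
    then show False by (simp add: F_def)
  qed
  then show "{x. x \<le> F x} = {}" by blast
  have graph: "{h. (\<chi> i. h (Inr i)) = F (\<chi> i. h (Inl i))} = (\<Inter>i. {h. h (Inr i) = h (Inl i0) + (-1)})"
    unfolding F_def by (auto simp: vec_eq_iff)
  show "semilinear_fun F"
    unfolding semilinear_fun_iff graph by (intro semilinear_INT_UNIV semilinear_coord_eq_plus)
qed

theorem mainTheorem10:
  fixes S :: "(real ^ 'n) set"
  shows "(closed S \<and> semilinear_set S \<and> tropical_cone S) \<longleftrightarrow>
    (\<exists>F :: real ^ 'n \<Rightarrow> real ^ 'n.
        semilinear_fun F \<and> mono F \<and> homogeneous_op F \<and> S = {x. x \<le> F x})"
proof
  assume S: "closed S \<and> semilinear_set S \<and> tropical_cone S"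
  show "\<exists>F. semilinear_fun F \<and> mono F \<and> homogeneous_op F \<and> S = {x. x \<le> F x}"
  proof (cases "S = {}")
    case True
    then show ?thesis using exists_operator_Collect_le_empty by metis
  next
    case False
    with S show ?thesis
      by (metis semilinear_fun_tropical_proj mono_tropical_proj homogeneous_tropical_proj
          Collect_le_tropical_proj)
  qed
next
  assume "\<exists>F. semilinear_fun F \<and> mono F \<and> homogeneous_op F \<and> S = {x. x \<le> F x}"
  then show "closed S \<and> semilinear_set S \<and> tropical_cone S"
    by (metis closed_Collect_le_mono_homogeneous semilinear_set_Collect_le
        tropical_cone_Collect_le_mono_homogeneous)
qed

end
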